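(* Assume $r+s=2$, and let $T=-T_{\mathfrak p}Q|_{\mathfrak p}+T_1Q|_{\mathfrak k_1}+T_2Q|_{\mathfrak k_2}$ with $T_{\mathfrak p},T_1,T_2>0$. Let $P(x)=ax^3+bx^2+cx+d$ where $$a=nd_2(1-\kappa_2)T_{\mathfrak p},\qquad b=d_1^2(1-\kappa_1)T_1-d_2^2(1-\kappa_2)T_2+2n^2T_{\mathfrak p}-\frac{n^2\kappa_1T_{\mathfrak p}^2}{T_1},$$ $$c=-2nd_2T_2+\frac{2nd_2\kappa_1T_{\mathfrak p}T_2}{T_1}-nd_2\kappa_2T_{\mathfrak p},\qquad d=-\frac{d_2^2\kappa_1T_2^2}{T_1}+\kappa_2d_2^2T_2.$$ Let $g=\beta Q|_{\mathfrak p}+\alpha_1Q|_{\mathfrak k_1}+\alpha_2Q|_{\mathfrak k_2}\in\mathcal M_T^0$ with $\beta,\alpha_1,\alpha_2>0$. Then $g$ is a critical point of $S|_{\mathcal M_T^0}$ if and only if $x=\frac{\alpha_2}{\beta}$ is a multiple root of $P$.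
   Context: Let $G$ be a connected non-compact simple Lie group with Lie algebra $\mathfrak g$, $K$ a maximal compact subgroup with Lie algebra $\mathfrak k$, $B$ the Killing form of $\mathfrak g$, and $\mathfrak p$ the $B$-orthogonal complement of $\mathfrak k$ in $\mathfrak g$. Let $Q=B|_{\mathfrak p}-B|_{\mathfrak k}$. Write $\mathfrak k=\mathfrak k_1\oplus\cdots\oplus\mathfrak k_{r+s}$, where $\mathfrak k_1,\dots,\mathfrak k_r$ are the simple ideals of $[\mathfrak k,\mathfrak k]$, $\mathfrak k_{r+1}$ is the centre of $\mathfrak k$, and $s=1$ if the centre is nontrivial, $s=0$ otherwise. Let $n=\dim\mathfrak p$, $d_i=\dim\mathfrak k_i$, and define $\kappa_i$ by $B_i=\kappa_iB|_{\mathfrak k_i}$, $B_i$ the Killing form of $\mathfrak k_i$. Left-invariant tensor fields on $G$ are identified with bilinear forms on $\mathfrak g$; $Q|_{\mathfrak u}$ denotes $Q$ restricted to $\mathfrak u$ and extended by zero on its $Q$-orthogonal complement. $\mathcal M_K$ is the set of left-invariant metrics on $G$ naturally reductive with respect to $G\times K$ (acting by $(x,k)y=xyk^{-1}$), which by a theorem of Gordon are exactly the metrics $\beta Q|_{\mathfrak p}+\sum_i\alpha_iQ|_{\mathfrak k_i}$ with $\beta,\alpha_i>0$; it is a manifold via these parameters. $S$ is the scalar curvature functional, and $\mathcal M_T^0=\{g\in\mathcal M_K:\mathrm{tr}_gT=0\}$ with the induced manifold structure. *)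

theory Defs
  imports "HOL-Analysis.Analysis" "HOL-Computational_Algebra.Polynomial"
begin

text \<open>Case r + s = 2.  A metric beta Q|p + alpha1 Q|k1 + alpha2 Q|k2 in M_K is encoded
  by its parameter triple (beta, alpha1, alpha2); M_K is the open positive octant.\<close>

definition MK :: "(real \<times> real \<times> real) set" where
  "MK = {(b, a1, a2). 0 < b \<and> 0 < a1 \<and> 0 < a2}"

text \<open>Scalar curvature S of the left-invariant metric with parameters (beta, alpha1, alpha2),
  in terms of n = dim p, d_i = dim k_i and kappa_i (B_i = kappa_i B|k_i):
  S = sum_i kappa_i d_i/(4 alpha_i) - sum_i d_i (1 - kappa_i) alpha_i/(4 beta^2) - n/(2 beta).\<close>

definition scal :: "nat \<Rightarrow> nat \<Rightarrow> nat \<Rightarrow> real \<Rightarrow> real \<Rightarrow> real \<times> real \<times> real \<Rightarrow> real" where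
  "scal n d1 d2 k1 k2 p = (case p of (b, a1, a2) \<Rightarrow>
      k1 * real d1 / (4 * a1) + k2 * real d2 / (4 * a2)
      - (real d1 * (1 - k1) * a1 + real d2 * (1 - k2) * a2) / (4 * b\<^sup>2)
      - real n / (2 * b))"

text \<open>tr_g T for T = -Tp Q|p + T1 Q|k1 + T2 Q|k2.\<close>

definition trT :: "nat \<Rightarrow> nat \<Rightarrow> nat \<Rightarrow> real \<Rightarrow> real \<Rightarrow> real \<Rightarrow> real \<times> real \<times> real \<Rightarrow> real" where
  "trT n d1 d2 Tp T1 T2 p = (case p of (b, a1, a2) \<Rightarrow>
      - Tp * real n / b + T1 * real d1 / a1 + T2 * real d2 / a2)"

definition MT0 :: "nat \<Rightarrow> nat \<Rightarrow> nat \<Rightarrow> real \<Rightarrow> real \<Rightarrow> real \<Rightarrow> (real \<times> real \<times> real) set" where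
  "MT0 n d1 d2 Tp T1 T2 = {p \<in> MK. trT n d1 d2 Tp T1 T2 p = 0}"

definition MT0_tangent :: "nat \<Rightarrow> nat \<Rightarrow> nat \<Rightarrow> real \<Rightarrow> real \<Rightarrow> real \<Rightarrow> real \<times> real \<times> real
    \<Rightarrow> (real \<times> real \<times> real) set" where
  "MT0_tangent n d1 d2 Tp T1 T2 p =
     {v. frechet_derivative (trT n d1 d2 Tp T1 T2) (at p) v = 0}"

definition crit_S_MT0 :: "nat \<Rightarrow> nat \<Rightarrow> nat \<Rightarrow> real \<Rightarrow> real \<Rightarrow> real \<Rightarrow> real \<Rightarrow> real
    \<Rightarrow> real \<times> real \<times> real \<Rightarrow> bool" where
  "crit_S_MT0 n d1 d2 k1 k2 Tp T1 T2 p \<longleftrightarrow>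
     p \<in> MT0 n d1 d2 Tp T1 T2 \<and>
     (\<forall>v \<in> MT0_tangent n d1 d2 Tp T1 T2 p.
        frechet_derivative (scal n d1 d2 k1 k2) (at p) v = 0)"

end

theory Submission
  imports Defs
begin

(* Both S and tr_g T are homogeneous of degree -1 in (beta, alpha_1, alpha_2), so by Euler's
   identity the Lagrange condition dS = lambda d(tr_g T) on M_T^0 amounts to S(g) = 0 together
   with proportionality of the alpha-components of the two gradients. Eliminating T_p by the
   constraint, P(alpha_2/beta) is a nonzero multiple of S(g), and P'(alpha_2/beta) is a
   combination of S(g) and that alpha-minor with nonzero coefficient on the minor. Hence g is
   critical iff alpha_2/beta is a common root of P and P'. *)

lemma kernel_subset_iff_parallel:
  fixes u w :: "'a::real_inner"
  assumes "w \<noteq> 0"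
  shows "(\<forall>v. w \<bullet> v = 0 \<longrightarrow> u \<bullet> v = 0) \<longleftrightarrow> (\<exists>c. u = c *\<^sub>R w)"
proof
  assume ker: "\<forall>v. w \<bullet> v = 0 \<longrightarrow> u \<bullet> v = 0"
  define v where "v = u - (u \<bullet> w / (w \<bullet> w)) *\<^sub>R w"
  have "w \<bullet> v = 0"
    using assms by (simp add: v_def inner_diff_right inner_commute)
  moreover from this ker have "u \<bullet> v = 0" by blast
  ultimately have "v \<bullet> v = 0"
    by (simp add: v_def inner_diff_left inner_commute)
  then show "\<exists>c. u = c *\<^sub>R w"
    by (auto simp: v_def)
qed auto

lemma parallel_iff_inner_eq_0_and_minor:
  fixes u w p :: "real \<times> real \<times> real"
  assumes wp: "w \<bullet> p = 0" and p0: "fst p \<noteq> 0" and w0: "fst w \<noteq> 0"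
  shows "(\<exists>c. u = c *\<^sub>R w) \<longleftrightarrow>
    u \<bullet> p = 0 \<and> fst (snd u) * snd (snd w) = snd (snd u) * fst (snd w)"
proof
  assume "\<exists>c. u = c *\<^sub>R w"
  then show "u \<bullet> p = 0 \<and> fst (snd u) * snd (snd w) = snd (snd u) * fst (snd w)"
    using wp by auto
next
  obtain u0 u1 u2 w0 w1 w2 p0 p1 p2 where
    uwp: "u = (u0, u1, u2)" "w = (w0, w1, w2)" "p = (p0, p1, p2)"
    by (metis prod_cases3)
  assume "u \<bullet> p = 0 \<and> fst (snd u) * snd (snd w) = snd (snd u) * fst (snd w)"
  then have up: "u \<bullet> p = 0" and minor: "u1 * w2 - u2 * w1 = 0"
    by (simp_all add: uwp)
  have "p0 * (u0 * w1 - u1 * w0) = w1 * (u \<bullet> p) + p2 * (u1 * w2 - u2 * w1) - u1 * (w \<bullet> p)"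
    and "p0 * (u0 * w2 - u2 * w0) = w2 * (u \<bullet> p) - p1 * (u1 * w2 - u2 * w1) - u2 * (w \<bullet> p)"
    by (simp_all add: uwp algebra_simps)
  then have "u0 * w1 = u1 * w0" "u0 * w2 = u2 * w0"
    using up minor wp p0 by (simp_all add: uwp)
  then have "u = (u0 / w0) *\<^sub>R w"
    using w0 by (simp add: uwp field_simps)
  then show "\<exists>c. u = c *\<^sub>R w" ..
qed

definition scal_grad :: "nat \<Rightarrow> nat \<Rightarrow> nat \<Rightarrow> real \<Rightarrow> real \<Rightarrow> real \<times> real \<times> real
    \<Rightarrow> real \<times> real \<times> real" where
  "scal_grad n d1 d2 k1 k2 p = (case p of (b, a1, a2) \<Rightarrow>
      ((real d1 * (1 - k1) * a1 + real d2 * (1 - k2) * a2) / (2 * b ^ 3) + real n / (2 * b\<^sup>2),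
       - k1 * real d1 / (4 * a1\<^sup>2) - real d1 * (1 - k1) / (4 * b\<^sup>2),
       - k2 * real d2 / (4 * a2\<^sup>2) - real d2 * (1 - k2) / (4 * b\<^sup>2)))"

definition trT_grad :: "nat \<Rightarrow> nat \<Rightarrow> nat \<Rightarrow> real \<Rightarrow> real \<Rightarrow> real \<Rightarrow> real \<times> real \<times> real
    \<Rightarrow> real \<times> real \<times> real" where
  "trT_grad n d1 d2 Tp T1 T2 p = (case p of (b, a1, a2) \<Rightarrow>
      (Tp * real n / b\<^sup>2, - T1 * real d1 / a1\<^sup>2, - T2 * real d2 / a2\<^sup>2))"

lemma scal_has_derivative:
  assumes "p \<in> MK"
  shows "(scal n d1 d2 k1 k2 has_derivative (\<lambda>v. scal_grad n d1 d2 k1 k2 p \<bullet> v)) (at p)"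
proof -
  obtain b a1 a2 where p: "p = (b, a1, a2)" and pos: "0 < b" "0 < a1" "0 < a2"
    using assms by (auto simp: MK_def)
  have scal_eq: "scal n d1 d2 k1 k2 = (\<lambda>q. k1 * real d1 / (4 * fst (snd q)) + k2 * real d2 / (4 * snd (snd q))
      - (real d1 * (1 - k1) * fst (snd q) + real d2 * (1 - k2) * snd (snd q)) / (4 * (fst q)\<^sup>2)
      - real n / (2 * fst q))"
    by (auto simp: scal_def fun_eq_iff split: prod.splits)
  show ?thesis
    unfolding p scal_eq
    apply (rule has_derivative_eq_rhs)
     apply (rule derivative_eq_intros | use pos in simp)+
    apply (auto simp: scal_grad_def fun_eq_iff field_simps power2_eq_square power3_eq_cube)
    done
qed

lemma trT_has_derivative:
  assumes "p \<in> MK"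
  shows "(trT n d1 d2 Tp T1 T2 has_derivative (\<lambda>v. trT_grad n d1 d2 Tp T1 T2 p \<bullet> v)) (at p)"
proof -
  obtain b a1 a2 where p: "p = (b, a1, a2)" and pos: "0 < b" "0 < a1" "0 < a2"
    using assms by (auto simp: MK_def)
  have trT_eq: "trT n d1 d2 Tp T1 T2 = (\<lambda>q. - Tp * real n / fst q + T1 * real d1 / fst (snd q)
      + T2 * real d2 / snd (snd q))"
    by (auto simp: trT_def fun_eq_iff split: prod.splits)
  show ?thesis
    unfolding p trT_eq
    apply (rule has_derivative_eq_rhs)
     apply (rule derivative_eq_intros | use pos in simp)+
    apply (auto simp: trT_grad_def fun_eq_iff field_simps power2_eq_square)
    done
qed

lemma scal_grad_inner_self:
  assumes "p \<in> MK"
  shows "scal_grad n d1 d2 k1 k2 p \<bullet> p = - scal n d1 d2 k1 k2 p"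
  using assms by (auto simp: MK_def scal_grad_def scal_def field_simps power2_eq_square power3_eq_cube)

lemma trT_grad_inner_self:
  assumes "p \<in> MK"
  shows "trT_grad n d1 d2 Tp T1 T2 p \<bullet> p = - trT n d1 d2 Tp T1 T2 p"
  using assms by (auto simp: MK_def trT_grad_def trT_def field_simps power2_eq_square)

lemma crit_S_MT0_iff:
  assumes g: "(b, a1, a2) \<in> MT0 n d1 d2 Tp T1 T2" and "0 < n" "Tp \<noteq> 0"
  shows "crit_S_MT0 n d1 d2 k1 k2 Tp T1 T2 (b, a1, a2) \<longleftrightarrow>
    scal n d1 d2 k1 k2 (b, a1, a2) = 0 \<and>
    (k1 * real d1 / a1\<^sup>2 + real d1 * (1 - k1) / b\<^sup>2) * (T2 * real d2 / a2\<^sup>2) =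
    (k2 * real d2 / a2\<^sup>2 + real d2 * (1 - k2) / b\<^sup>2) * (T1 * real d1 / a1\<^sup>2)"
proof -
  let ?p = "(b, a1, a2)"
  let ?dS = "scal_grad n d1 d2 k1 k2 ?p" and ?dF = "trT_grad n d1 d2 Tp T1 T2 ?p"
  have p: "?p \<in> MK" "trT n d1 d2 Tp T1 T2 ?p = 0"
    using g by (simp_all add: MT0_def)
  then have b: "b \<noteq> 0" by (simp add: MK_def)
  have dF0: "fst ?dF \<noteq> 0"
    using b assms by (simp add: trT_grad_def)
  have "crit_S_MT0 n d1 d2 k1 k2 Tp T1 T2 ?p \<longleftrightarrow> (\<forall>v. ?dF \<bullet> v = 0 \<longrightarrow> ?dS \<bullet> v = 0)"
    using g by (simp add: crit_S_MT0_def MT0_tangent_def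
        frechet_derivative_at[OF scal_has_derivative[OF p(1)], symmetric]
        frechet_derivative_at[OF trT_has_derivative[OF p(1)], symmetric])
  also have "\<dots> \<longleftrightarrow> (\<exists>c. ?dS = c *\<^sub>R ?dF)"
    using dF0 by (intro kernel_subset_iff_parallel) auto
  also have "\<dots> \<longleftrightarrow> ?dS \<bullet> ?p = 0 \<and> fst (snd ?dS) * snd (snd ?dF) = snd (snd ?dS) * fst (snd ?dF)"
    using b dF0 p by (intro parallel_iff_inner_eq_0_and_minor) (simp_all add: trT_grad_inner_self)
  also have "\<dots> \<longleftrightarrow> scal n d1 d2 k1 k2 ?p = 0 \<and>
    (k1 * real d1 / a1\<^sup>2 + real d1 * (1 - k1) / b\<^sup>2) * (T2 * real d2 / a2\<^sup>2) =
    (k2 * real d2 / a2\<^sup>2 + real d2 * (1 - k2) / b\<^sup>2) * (T1 * real d1 / a1\<^sup>2)"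
  proof -
    have "?dS \<bullet> ?p = 0 \<longleftrightarrow> scal n d1 d2 k1 k2 ?p = 0"
      using scal_grad_inner_self[OF p(1)] by (simp del: inner_Pair)
    moreover have "fst (snd ?dS) * snd (snd ?dF) = snd (snd ?dS) * fst (snd ?dF) \<longleftrightarrow>
      (k1 * real d1 / a1\<^sup>2 + real d1 * (1 - k1) / b\<^sup>2) * (T2 * real d2 / a2\<^sup>2) =
      (k2 * real d2 / a2\<^sup>2 + real d2 * (1 - k2) / b\<^sup>2) * (T1 * real d1 / a1\<^sup>2)"
      using p(1) by (auto simp: MK_def scal_grad_def trT_grad_def field_simps)
    ultimately show ?thesis by blast
  qed
  finally show ?thesis .
qed

definition crit_poly :: "nat \<Rightarrow> nat \<Rightarrow> nat \<Rightarrow> real \<Rightarrow> real \<Rightarrow> real \<Rightarrow> real \<Rightarrow> real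
    \<Rightarrow> real poly" where
  "crit_poly n d1 d2 k1 k2 Tp T1 T2 =
     [: (- (real d2 ^ 2 * k1 * T2 ^ 2 / T1) + k2 * real d2 ^ 2 * T2),
        (- (2 * real n * real d2 * T2) + 2 * real n * real d2 * k1 * Tp * T2 / T1
          - real n * real d2 * k2 * Tp),
        (real d1 ^ 2 * (1 - k1) * T1 - real d2 ^ 2 * (1 - k2) * T2 + 2 * real n ^ 2 * Tp
          - real n ^ 2 * k1 * Tp ^ 2 / T1),
        (real n * real d2 * (1 - k2) * Tp) :]"

lemma MT0_Tp_eq:
  assumes "(b, a1, a2) \<in> MT0 n d1 d2 Tp T1 T2" and "0 < n"
  shows "Tp = (T1 * real d1 / a1 + T2 * real d2 / a2) * b / real n"
  using assms by (simp add: MT0_def MK_def trT_def field_simps)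

lemma poly_crit_poly:
  assumes g: "(b, a1, a2) \<in> MT0 n d1 d2 Tp T1 T2" and "0 < n" "T1 \<noteq> 0"
  shows "poly (crit_poly n d1 d2 k1 k2 Tp T1 T2) (a2 / b) =
    - 4 * T1 * real d1 * a2\<^sup>2 / a1 * scal n d1 d2 k1 k2 (b, a1, a2)"
proof -
  have pos: "0 < b" "0 < a1" "0 < a2"
    using g by (simp_all add: MT0_def MK_def)
  show ?thesis
    using pos assms unfolding MT0_Tp_eq[OF g \<open>0 < n\<close>]
    by (simp add: crit_poly_def scal_def field_simps power2_eq_square power3_eq_cube)
qed

lemma poly_pderiv_crit_poly:
  assumes g: "(b, a1, a2) \<in> MT0 n d1 d2 Tp T1 T2" and "0 < n" "T1 \<noteq> 0"
  shows "poly (pderiv (crit_poly n d1 d2 k1 k2 Tp T1 T2)) (a2 / b) =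
    - 4 * (2 * Tp * real n * a2 / b - T2 * real d2) * b * scal n d1 d2 k1 k2 (b, a1, a2)
    - a2\<^sup>2 * a1 * b *
      ((k1 * real d1 / a1\<^sup>2 + real d1 * (1 - k1) / b\<^sup>2) * (T2 * real d2 / a2\<^sup>2)
       - (k2 * real d2 / a2\<^sup>2 + real d2 * (1 - k2) / b\<^sup>2) * (T1 * real d1 / a1\<^sup>2))"
proof -
  have pos: "0 < b" "0 < a1" "0 < a2"
    using g by (simp_all add: MT0_def MK_def)
  show ?thesis
    using pos assms unfolding MT0_Tp_eq[OF g \<open>0 < n\<close>]
    by (simp add: crit_poly_def scal_def pderiv_pCons field_simps power2_eq_square power3_eq_cube)
qed

lemma linear_sq_dvd_iff_poly_pderiv:
  fixes p :: "'a::idom poly"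
  shows "[:-r, 1:] ^ 2 dvd p \<longleftrightarrow> poly p r = 0 \<and> poly (pderiv p) r = 0"
proof (cases "poly p r = 0")
  case True
  then obtain q where q: "p = [:-r, 1:] * q"
    using dvd_iff_poly_eq_0[of "-r" p] by (auto elim: dvdE)
  have "pderiv p = q + [:-r, 1:] * pderiv q"
    unfolding q by (simp only: pderiv_mult pderiv_pCons pderiv_0) simp
  then have "poly (pderiv p) r = poly q r"
    by simp
  moreover have "[:-r, 1:] ^ 2 dvd p \<longleftrightarrow> [:-r, 1:] dvd q"
    unfolding q power2_eq_square by (rule dvd_mult_cancel_left[THEN trans]) simp
  ultimately show ?thesis
    using True dvd_iff_poly_eq_0[of "-r" q] by simp
next
  case False
  then have "\<not> [:-r, 1:] dvd p"
    using dvd_iff_poly_eq_0[of "-r" p] by simp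
  moreover have "[:-r, 1:] dvd [:-r, 1:] ^ 2"
    unfolding power2_eq_square by (rule dvd_triv_left)
  ultimately have "\<not> [:-r, 1:] ^ 2 dvd p"
    using dvd_trans by blast
  then show ?thesis
    using False by simp
qed

theorem lemma5p9:
  fixes n d1 d2 :: nat and k1 k2 Tp T1 T2 b a1 a2 :: real
  assumes n_pos: "0 < n" and d1_pos: "0 < d1" and d2_pos: "0 < d2"
    and k1: "0 < k1" "k1 < 1" and k2: "0 \<le> k2" "k2 < 1"
    and centre: "k2 = 0 \<longrightarrow> d2 = 1"
    and dimrel: "real n = 2 * (real d1 * (1 - k1) + real d2 * (1 - k2))"
    and T_pos: "0 < Tp" "0 < T1" "0 < T2"
    and g_in: "(b, a1, a2) \<in> MT0 n d1 d2 Tp T1 T2"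
  shows "crit_S_MT0 n d1 d2 k1 k2 Tp T1 T2 (b, a1, a2) \<longleftrightarrow>
     [:- (a2 / b), 1:] ^ 2 dvd
       [: (- (real d2 ^ 2 * k1 * T2 ^ 2 / T1) + k2 * real d2 ^ 2 * T2),
          (- (2 * real n * real d2 * T2) + 2 * real n * real d2 * k1 * Tp * T2 / T1
            - real n * real d2 * k2 * Tp),
          (real d1 ^ 2 * (1 - k1) * T1 - real d2 ^ 2 * (1 - k2) * T2 + 2 * real n ^ 2 * Tp
            - real n ^ 2 * k1 * Tp ^ 2 / T1),
          (real n * real d2 * (1 - k2) * Tp) :]"
proof -
  let ?P = "crit_poly n d1 d2 k1 k2 Tp T1 T2"
  have pos: "0 < b" "0 < a1" "0 < a2"
    using g_in by (simp_all add: MT0_def MK_def)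
  have "crit_S_MT0 n d1 d2 k1 k2 Tp T1 T2 (b, a1, a2) \<longleftrightarrow>
    scal n d1 d2 k1 k2 (b, a1, a2) = 0 \<and>
    (k1 * real d1 / a1\<^sup>2 + real d1 * (1 - k1) / b\<^sup>2) * (T2 * real d2 / a2\<^sup>2) =
    (k2 * real d2 / a2\<^sup>2 + real d2 * (1 - k2) / b\<^sup>2) * (T1 * real d1 / a1\<^sup>2)"
    using g_in n_pos T_pos by (intro crit_S_MT0_iff) auto
  also have "\<dots> \<longleftrightarrow> poly ?P (a2 / b) = 0 \<and> poly (pderiv ?P) (a2 / b) = 0"
  proof -
    have "- 4 * T1 * real d1 * a2\<^sup>2 / a1 \<noteq> 0" "a2\<^sup>2 * a1 * b \<noteq> 0"
      using pos d1_pos T_pos by simp_all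
    then show ?thesis
      using T_pos
      by (simp add: poly_crit_poly[OF g_in n_pos] poly_pderiv_crit_poly[OF g_in n_pos] cong: conj_cong)
  qed
  also have "\<dots> \<longleftrightarrow> [:- (a2 / b), 1:] ^ 2 dvd ?P"
    by (rule linear_sq_dvd_iff_poly_pderiv[symmetric])
  finally show ?thesis
    by (simp only: crit_poly_def)
qed

end
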